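(* For a finite rooted tree $T$, define for each vertex $v$ the polynomial $C_v(x)\in\mathbb{Z}[x]$ inductively by $C_v(x)=x+2$ if $v$ is a leaf, and $C_v(x)=x^{n_v}+2x\prod_{i=1}^{\deg(v)}C_{v_i}(x)+2$ if $v$ is internal, where $n_v$ is the number of vertices of the subtree $T_v$ rooted at $v$ and $v_1,\dots,v_{\deg(v)}$ are the children of $v$; set $C_T(x)=C_r(x)$ where $r$ is the root of $T$. Then $C_T$ is a complete invariant for rooted trees: for any two finite rooted trees $T$ and $T'$, $C_T(x)=C_{T'}(x)$ if and only if $T$ and $T'$ are isomorphic as rooted trees.
   Context: An isomorphism of rooted trees is a graph isomorphism mapping root to root. $T_v$ consists of $v$ and all its descendants. *)

theory Defs
  imports "HOL-Computational_Algebra.Polynomial"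
begin

definition rooted_tree :: "'a set \<Rightarrow> ('a \<times> 'a) set \<Rightarrow> 'a \<Rightarrow> bool" where
  "rooted_tree V E r \<longleftrightarrow>
     finite V \<and> r \<in> V \<and> E \<subseteq> V \<times> V \<and> sym E \<and> (\<forall>v. (v, v) \<notin> E) \<and>
     (\<forall>u\<in>V. \<forall>v\<in>V. (u, v) \<in> E\<^sup>*) \<and>
     card {{u, v} | u v. (u, v) \<in> E} = card V - 1"

text \<open>w is a child of v: w is a neighbour of v, w is not the root, and v is still
reachable from the root after deleting w (so w does not lie on the root-v path).\<close>

definition child :: "'a set \<Rightarrow> ('a \<times> 'a) set \<Rightarrow> 'a \<Rightarrow> 'a \<Rightarrow> 'a \<Rightarrow> bool" where
  "child V E r v w \<longleftrightarrow> (v, w) \<in> E \<and> w \<noteq> r \<and>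
     (r, v) \<in> (E \<inter> ((V - {w}) \<times> (V - {w})))\<^sup>*"

definition children :: "'a set \<Rightarrow> ('a \<times> 'a) set \<Rightarrow> 'a \<Rightarrow> 'a \<Rightarrow> 'a set" where
  "children V E r v = {w. child V E r v w}"

definition subtree :: "'a set \<Rightarrow> ('a \<times> 'a) set \<Rightarrow> 'a \<Rightarrow> 'a \<Rightarrow> 'a set" where
  "subtree V E r v = {w. (v, w) \<in> {(a, b). child V E r a b}\<^sup>*}"

inductive has_C :: "'a set \<Rightarrow> ('a \<times> 'a) set \<Rightarrow> 'a \<Rightarrow> 'a \<Rightarrow> int poly \<Rightarrow> bool"
  for V E r where
  leaf: "children V E r v = {} \<Longrightarrow> has_C V E r v [:2, 1:]"
| internal: "children V E r v \<noteq> {} \<Longrightarrow>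
     (\<And>w. w \<in> children V E r v \<Longrightarrow> has_C V E r w (f w)) \<Longrightarrow>
     has_C V E r v
       (monom 1 (card (subtree V E r v))
        + smult 2 ([:0, 1:] * (\<Prod>w\<in>children V E r v. f w)) + [:2:])"

definition C_poly :: "'a set \<Rightarrow> ('a \<times> 'a) set \<Rightarrow> 'a \<Rightarrow> 'a \<Rightarrow> int poly" where
  "C_poly V E r v = (THE p. has_C V E r v p)"

definition C_tree :: "'a set \<Rightarrow> ('a \<times> 'a) set \<Rightarrow> 'a \<Rightarrow> int poly" where
  "C_tree V E r = C_poly V E r r"

definition rooted_tree_iso ::
  "'a set \<Rightarrow> ('a \<times> 'a) set \<Rightarrow> 'a \<Rightarrow> 'b set \<Rightarrow> ('b \<times> 'b) set \<Rightarrow> 'b \<Rightarrow> bool" where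
  "rooted_tree_iso V E r V' E' r' \<longleftrightarrow>
     (\<exists>f. bij_betw f V V' \<and> f r = r' \<and>
          (\<forall>u\<in>V. \<forall>v\<in>V. (u, v) \<in> E \<longleftrightarrow> (f u, f v) \<in> E'))"

end

(*
  Every C_v satisfies Eisenstein's criterion at the prime 2: its constant term is 2, its other
  non-leading coefficients are even, and its leading coefficient is odd and positive. Hence every
  C_v is a prime element of Z[x]. For an internal vertex v, the degree of C_v is n_v, so C_v
  determines the product of the C_w over the children w of v, and by unique factorisation in Z[x]
  it determines the multiset of these primes. By induction on n_v, equal polynomials at v and v'
  therefore match the children of v with those of v' so that matched children carry equal
  polynomials; the isomorphisms of the matched child subtrees glue to an isomorphism of T_v onto
  T_v'. Conversely, an isomorphism of rooted trees maps children to children, and so preserves C.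
*)

theory Submission
  imports Defs "HOL-Computational_Algebra.Polynomial_Factorial" "HOL-Combinatorics.Permutations"
    "HOL-Library.Disjoint_Sets"
begin

section \<open>Eisenstein polynomials at 2\<close>

lemma even_odd_factors_of_two:
  fixes a b :: int
  assumes "a * b = 2"
  shows "even a \<and> odd b \<or> even b \<and> odd a"
proof -
  have "odd b" if "even a" and "a * b = 2" for a b :: int
  proof
    assume "even b"
    with \<open>even a\<close> have "2 * 2 dvd a * b"
      by (rule mult_dvd_mono)
    with \<open>a * b = 2\<close> show False
      by simp
  qed
  moreover have "even a \<or> even b"
    using assms by (metis even_mult_iff even_numeral)
  ultimately show ?thesis
    using assms by (metis mult.commute)
qed

lemma odd_coeff_mult_first_odd:
  fixes a b :: "int poly"
  assumes "odd (coeff b 0)" and "odd (coeff a k)" and "\<And>i. i < k \<Longrightarrow> even (coeff a i)"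
  shows "odd (coeff (a * b) k)"
proof -
  have "coeff (a * b) k = (\<Sum>i<k. coeff a i * coeff b (k - i)) + coeff a k * coeff b 0"
    by (simp add: coeff_mult lessThan_Suc_atMost[symmetric])
  moreover have "even (\<Sum>i<k. coeff a i * coeff b (k - i))"
    using assms(3) by (intro dvd_sum) simp
  ultimately show ?thesis
    using assms(1,2) by simp
qed

definition two_eisenstein :: "int poly \<Rightarrow> bool" where
  "two_eisenstein p \<longleftrightarrow> degree p \<ge> 1 \<and> coeff p 0 = 2 \<and> (\<forall>i<degree p. even (coeff p i)) \<and>
     lead_coeff p > 0 \<and> odd (lead_coeff p)"

lemma two_eisenstein_no_factor_with_even_constant:
  assumes "two_eisenstein (a * b)" and "even (coeff a 0)" and "odd (coeff b 0)"
  shows "degree b = 0"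
proof (rule ccontr)
  assume "degree b \<noteq> 0"
  let ?p = "a * b"
  have "?p \<noteq> 0"
    using assms(1) by (auto simp: two_eisenstein_def)
  then have "a \<noteq> 0" "b \<noteq> 0" and deg: "degree ?p = degree a + degree b"
    by (auto simp: degree_mult_eq)
  have "odd (lead_coeff a)"
    using assms(1) by (auto simp: two_eisenstein_def lead_coeff_mult)
  define k where "k = (LEAST i. odd (coeff a i))"
  have "odd (coeff a k)"
    unfolding k_def using \<open>odd (lead_coeff a)\<close> by (rule LeastI)
  moreover have "k \<le> degree a"
    unfolding k_def using \<open>odd (lead_coeff a)\<close> by (rule Least_le)
  moreover have "\<And>i. i < k \<Longrightarrow> even (coeff a i)"
    unfolding k_def using not_less_Least by blast
  ultimately have "odd (coeff ?p k)" and "k < degree ?p"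
    using odd_coeff_mult_first_odd[OF assms(3)] deg \<open>degree b \<noteq> 0\<close> by auto
  then show False
    using assms(1) by (auto simp: two_eisenstein_def)
qed

lemma two_eisenstein_constant_factor_unit:
  assumes "two_eisenstein (a * b)" and "degree a = 0"
  shows "is_unit a"
proof -
  obtain c where a: "a = [:c:]"
    using assms(2) by (metis degree_eq_zeroE)
  have "c * coeff b 0 = 2"
    using assms(1) by (simp add: a two_eisenstein_def)
  then have "c dvd 2"
    by (metis dvd_triv_left)
  moreover have "c dvd lead_coeff (a * b)"
    by (simp add: a)
  moreover have "coprime 2 (lead_coeff (a * b))"
    using assms(1) by (simp add: two_eisenstein_def)
  ultimately have "\<bar>c\<bar> = 1"
    using coprime_common_divisor_int by blast
  then show ?thesis
    by (auto simp: a is_unit_poly_iff abs_eq_iff)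
qed

lemma two_eisenstein_irreducible:
  assumes "two_eisenstein p"
  shows "irreducible p"
proof (rule irreducibleI)
  show "p \<noteq> 0" "\<not> is_unit p"
    using assms by (auto simp: two_eisenstein_def is_unit_poly_iff)
next
  fix a b assume p: "p = a * b"
  have "coeff a 0 * coeff b 0 = 2"
    using assms by (simp add: p two_eisenstein_def coeff_mult_0)
  then have "even (coeff a 0) \<and> odd (coeff b 0) \<or> even (coeff b 0) \<and> odd (coeff a 0)"
    by (rule even_odd_factors_of_two)
  then show "is_unit a \<or> is_unit b"
    using assms two_eisenstein_no_factor_with_even_constant two_eisenstein_constant_factor_unit
    by (metis mult.commute p)
qed

lemma two_eisenstein_prime:
  assumes "two_eisenstein p"
  shows "prime p"
proof -
  have "prime_elem p"
    using assms by (intro irreducible_imp_prime_elem two_eisenstein_irreducible)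
  moreover have "normalize p = p"
    using assms by (simp add: two_eisenstein_def normalize_poly_eq_map_poly)
  ultimately show ?thesis
    by (simp add: prime_def)
qed

lemma two_eisenstein_prod:
  assumes "\<And>w. w \<in> S \<Longrightarrow> two_eisenstein (P w)"
  shows "degree (\<Prod>w\<in>S. P w) = (\<Sum>w\<in>S. degree (P w))"
    and "lead_coeff (\<Prod>w\<in>S. P w) > 0"
proof -
  have "P w \<noteq> 0" if "w \<in> S" for w
    using assms[OF that] by (auto simp: two_eisenstein_def)
  then show "degree (\<Prod>w\<in>S. P w) = (\<Sum>w\<in>S. degree (P w))"
    by (simp add: degree_prod_eq_sum_degree)
  show "lead_coeff (\<Prod>w\<in>S. P w) > 0"
    unfolding lead_coeff_prod by (rule prod_pos) (use assms in \<open>simp add: two_eisenstein_def\<close>)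
qed

text \<open>For an internal vertex v, C_v is C_step applied to the product of the C_w over the
  children w of v: the exponent n_v = |T_v| is one more than the degree of that product.\<close>

definition C_step :: "int poly \<Rightarrow> int poly" where
  "C_step Q = monom 1 (Suc (degree Q)) + smult 2 ([:0, 1:] * Q) + [:2:]"

lemma coeff_C_step:
  "coeff (C_step Q) i =
     (if i = Suc (degree Q) then 1 else 0) + (if i = 0 then 2 else 2 * coeff Q (i - 1))"
  by (cases i) (simp_all add: C_step_def coeff_monom)

lemma degree_C_step: "degree (C_step Q) = Suc (degree Q)"
  and lead_coeff_C_step: "lead_coeff (C_step Q) = 1 + 2 * lead_coeff Q"
proof -
  have top: "coeff (C_step Q) (Suc (degree Q)) = 1 + 2 * lead_coeff Q"
    by (simp add: coeff_C_step)
  have "odd (1 + 2 * lead_coeff Q)"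
    by simp
  then have "Suc (degree Q) \<le> degree (C_step Q)"
    by (intro le_degree) (metis top even_zero)
  moreover have "degree (C_step Q) \<le> Suc (degree Q)"
    by (intro degree_le) (auto simp: coeff_C_step coeff_eq_0)
  ultimately show "degree (C_step Q) = Suc (degree Q)"
    by (rule antisym[rotated])
  with top show "lead_coeff (C_step Q) = 1 + 2 * lead_coeff Q"
    by simp
qed

lemma C_step_inject: "C_step P = C_step Q \<longleftrightarrow> P = Q"
proof
  assume eq: "C_step P = C_step Q"
  then have "degree P = degree Q"
    by (metis degree_C_step nat.inject)
  with eq have "smult 2 (pCons 0 P) = smult 2 (pCons 0 Q)"
    by (simp add: C_step_def)
  then show "P = Q"
    by (metis smult_cancel pCons_eq_iff zero_neq_numeral)
qed simp

lemma two_eisenstein_C_step: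
  assumes "lead_coeff Q \<ge> 0"
  shows "two_eisenstein (C_step Q)"
  using assms
  by (auto simp: two_eisenstein_def degree_C_step lead_coeff_C_step coeff_C_step)

section \<open>Unique factorisation and matchings\<close>

lemma image_mset_eq_if_prod_primes_eq:
  fixes P :: "'a \<Rightarrow> 'c :: factorial_semiring" and P' :: "'b \<Rightarrow> 'c"
  assumes "finite S" "finite S'"
    and "\<And>w. w \<in> S \<Longrightarrow> prime (P w)" "\<And>w. w \<in> S' \<Longrightarrow> prime (P' w)"
    and "(\<Prod>w\<in>S. P w) = (\<Prod>w\<in>S'. P' w)"
  shows "image_mset P (mset_set S) = image_mset P' (mset_set S')"
proof -
  have "image_mset P (mset_set S) = prime_factorization (\<Prod>w\<in>S. P w)"
    using assms(1,3) unfolding prod_unfold_prod_mset by (subst prime_factorization_prod_mset_primes) auto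
  also have "\<dots> = prime_factorization (\<Prod>w\<in>S'. P' w)"
    using assms(5) by simp
  also have "\<dots> = image_mset P' (mset_set S')"
    using assms(2,4) unfolding prod_unfold_prod_mset by (subst prime_factorization_prod_mset_primes) auto
  finally show ?thesis .
qed

lemma image_mset_eq_imp_bij_betw:
  fixes f :: "'a \<Rightarrow> 'c" and g :: "'b \<Rightarrow> 'c"
  assumes "finite A" "finite B" and eq: "image_mset f (mset_set A) = image_mset g (mset_set B)"
  obtains h where "bij_betw h A B" and "\<And>x. x \<in> A \<Longrightarrow> g (h x) = f x"
proof -
  have "card A = card B"
    using arg_cong[OF eq, of size] by simp
  then obtain k where k: "bij_betw k A B"
    using assms(1,2) finite_same_card_bij by blast
  then have "mset_set B = image_mset k (mset_set A)"
    by (simp add: bij_betw_def image_mset_mset_set)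
  then have "image_mset g (mset_set B) = image_mset (g \<circ> k) (mset_set A)"
    by (simp add: multiset.map_comp)
  with eq obtain p where p: "p permutes A" "\<forall>x\<in>A. f x = (g \<circ> k) (p x)"
    using image_mset_eq_implies_permutes[OF assms(1)] by metis
  have "bij_betw (k \<circ> p) A B"
    using permutes_imp_bij[OF p(1)] k by (rule bij_betw_trans)
  with p(2) show thesis
    by (intro that[of "k \<circ> p"]) auto
qed

section \<open>Finite rooted trees\<close>

locale finite_rooted_tree =
  fixes V :: "'a set" and E :: "('a \<times> 'a) set" and r :: 'a
  assumes rooted_tree: "rooted_tree V E r"
begin

lemma finite_V: "finite V"
  and root_in_V: "r \<in> V"
  and edges_subset: "E \<subseteq> V \<times> V"
  and sym_edges: "sym E"
  and connected: "u \<in> V \<Longrightarrow> w \<in> V \<Longrightarrow> (u, w) \<in> E\<^sup>*"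
  and card_edges: "card {{u, v} | u v. (u, v) \<in> E} = card V - 1"
  using rooted_tree unfolding rooted_tree_def by auto

definition depth :: "'a \<Rightarrow> nat" where
  "depth v = (LEAST n. (r, v) \<in> E ^^ n)"

lemma depth_le: "(r, v) \<in> E ^^ n \<Longrightarrow> depth v \<le> n"
  unfolding depth_def by (rule Least_le)

lemma depth_path: "v \<in> V \<Longrightarrow> (r, v) \<in> E ^^ depth v"
  unfolding depth_def using connected[OF root_in_V] rtrancl_power by (metis LeastI)

lemma depth_edge: "(u, v) \<in> E \<Longrightarrow> depth v \<le> Suc (depth u)"
  using depth_path edges_subset by (intro depth_le) auto

definition parent :: "'a \<Rightarrow> 'a" where
  "parent v = (SOME u. (u, v) \<in> E \<and> depth v = Suc (depth u))"

lemma parent_edge: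
  assumes "v \<in> V" "v \<noteq> r"
  shows "(parent v, v) \<in> E" and "depth v = Suc (depth (parent v))"
proof -
  obtain m where m: "depth v = Suc m"
    using assms depth_path[of v] by (cases "depth v") auto
  then obtain u where u: "(r, u) \<in> E ^^ m" "(u, v) \<in> E"
    using depth_path[OF assms(1)] by auto
  with m have "depth v = Suc (depth u)"
    using depth_le[of u m] depth_edge[of u v] by simp
  with u(2) have "\<exists>u. (u, v) \<in> E \<and> depth v = Suc (depth u)"
    by blast
  then show "(parent v, v) \<in> E" "depth v = Suc (depth (parent v))"
    unfolding parent_def by (metis (mono_tags, lifting) someI_ex)+
qed

lemma parent_in_V: "v \<in> V \<Longrightarrow> v \<noteq> r \<Longrightarrow> parent v \<in> V"
  using parent_edge(1) edges_subset by auto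

text \<open>The edge count is what makes the graph a tree: the edges to the parents are
  already |V| - 1 distinct edges, so there are no others.\<close>

lemma parent_edges: "(\<lambda>v. {v, parent v}) ` (V - {r}) = {{u, v} | u v. (u, v) \<in> E}"
proof (rule card_subset_eq)
  have "{{u, v} | u v. (u, v) \<in> E} = (\<lambda>(u, v). {u, v}) ` E"
    by auto
  then show "finite {{u, v} | u v. (u, v) \<in> E}"
    using finite_subset[OF edges_subset] finite_V by simp
  show "(\<lambda>v. {v, parent v}) ` (V - {r}) \<subseteq> {{u, v} | u v. (u, v) \<in> E}"
  proof (rule image_subsetI)
    fix v assume "v \<in> V - {r}"
    then have "(parent v, v) \<in> E" and "{v, parent v} = {parent v, v}"
      by (auto simp: parent_edge(1))
    then show "{v, parent v} \<in> {{u, v} | u v. (u, v) \<in> E}"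
      by blast
  qed
  have "inj_on (\<lambda>v. {v, parent v}) (V - {r})"
  proof (rule inj_onI)
    fix x y assume "x \<in> V - {r}" "y \<in> V - {r}" "{x, parent x} = {y, parent y}"
    then show "x = y"
      using parent_edge(2)[of x] parent_edge(2)[of y] by (auto simp: doubleton_eq_iff)
  qed
  then show "card ((\<lambda>v. {v, parent v}) ` (V - {r})) = card {{u, v} | u v. (u, v) \<in> E}"
    using finite_V root_in_V by (simp add: card_image card_edges)
qed

lemma edge_iff_parent:
  assumes "u \<in> V" "v \<in> V"
  shows "(u, v) \<in> E \<longleftrightarrow> (v \<noteq> r \<and> u = parent v) \<or> (u \<noteq> r \<and> v = parent u)"
proof
  assume "(u, v) \<in> E"
  then obtain x where "x \<in> V - {r}" "{u, v} = {x, parent x}"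
    using parent_edges by blast
  then show "(v \<noteq> r \<and> u = parent v) \<or> (u \<noteq> r \<and> v = parent u)"
    by (auto simp: doubleton_eq_iff)
next
  assume "(v \<noteq> r \<and> u = parent v) \<or> (u \<noteq> r \<and> v = parent u)"
  then show "(u, v) \<in> E"
    using assms parent_edge(1) sym_edges by (auto dest: symD)
qed

lemma root_path_within_depth:
  "u \<in> V \<Longrightarrow> (r, u) \<in> (Restr E {x \<in> V. depth x \<le> depth u})\<^sup>*"
proof (induction "depth u" arbitrary: u rule: less_induct)
  case less
  show ?case
  proof (cases "u = r")
    case False
    let ?p = "parent u" and ?S = "\<lambda>u. {x \<in> V. depth x \<le> depth u}"
    have p: "(?p, u) \<in> E" "depth u = Suc (depth ?p)" "?p \<in> V"
      using parent_edge parent_in_V less.prems False by auto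
    have "(r, ?p) \<in> (Restr E (?S ?p))\<^sup>*"
      using less.hyps p by simp
    also have "\<dots> \<subseteq> (Restr E (?S u))\<^sup>*"
      using p by (intro rtrancl_mono) auto
    finally show ?thesis
      using p less.prems by (auto intro: rtrancl_into_rtrancl)
  qed simp
qed

definition parent_rel :: "('a \<times> 'a) set" where
  "parent_rel = {(parent y, y) | y. y \<in> V - {r}}"

lemma reachable_avoiding_not_descendant:
  assumes "(r, x) \<in> (Restr E (V - {w}))\<^sup>*" and "w \<noteq> r"
  shows "(w, x) \<notin> parent_rel\<^sup>*"
  using assms(1)
proof (induction rule: rtrancl_induct)
  case base
  show ?case
    using assms(2) by (auto elim: rtranclE simp: parent_rel_def)
next
  case (step x y)
  show ?case
  proof
    assume "(w, y) \<in> parent_rel\<^sup>*"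
    moreover have "y \<noteq> w"
      using step.hyps by auto
    ultimately have below: "(w, parent y) \<in> parent_rel\<^sup>*" and "y \<noteq> r"
      by (auto elim: rtranclE simp: parent_rel_def)
    have "x \<noteq> parent y"
      using below step.IH by blast
    then have "x \<noteq> r \<and> y = parent x"
      using step.hyps edge_iff_parent by blast
    then have "(y, x) \<in> parent_rel"
      using step.hyps by (auto simp: parent_rel_def)
    with \<open>(w, y) \<in> parent_rel\<^sup>*\<close> step.IH show False
      by (meson rtrancl.rtrancl_into_rtrancl)
  qed
qed

lemma child_iff_parent: "child V E r v w \<longleftrightarrow> w \<in> V \<and> w \<noteq> r \<and> v = parent w"
proof
  assume "w \<in> V \<and> w \<noteq> r \<and> v = parent w"
  then have w: "w \<in> V" "w \<noteq> r" and v: "v = parent w" "v \<in> V" "(v, w) \<in> E"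
    using parent_edge parent_in_V by auto
  have "(r, v) \<in> (Restr E {x \<in> V. depth x \<le> depth v})\<^sup>*"
    using root_path_within_depth v(2) by blast
  also have "\<dots> \<subseteq> (Restr E (V - {w}))\<^sup>*"
    using parent_edge(2)[OF w] v(1) by (intro rtrancl_mono) auto
  finally show "child V E r v w"
    unfolding child_def using v w by blast
next
  assume "child V E r v w"
  then have e: "(v, w) \<in> E" and w: "w \<noteq> r" "w \<in> V"
    and path: "(r, v) \<in> (Restr E (V - {w}))\<^sup>*"
    using edges_subset by (auto simp: child_def)
  have "(w, v) \<notin> parent_rel"
    using reachable_avoiding_not_descendant[OF path w(1)] by blast
  then show "w \<in> V \<and> w \<noteq> r \<and> v = parent w"
    using e w edges_subset edge_iff_parent[of v w] by (auto simp: parent_rel_def)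
qed

abbreviation T :: "'a \<Rightarrow> 'a set" where
  "T \<equiv> subtree V E r"

abbreviation chs :: "'a \<Rightarrow> 'a set" where
  "chs \<equiv> children V E r"

lemma mem_children_iff: "w \<in> chs v \<longleftrightarrow> w \<in> V \<and> w \<noteq> r \<and> v = parent w"
  by (simp add: children_def child_iff_parent)

lemma mem_subtree_iff: "x \<in> T v \<longleftrightarrow> (v, x) \<in> parent_rel\<^sup>*"
proof -
  have "{(a, b). child V E r a b} = parent_rel"
    by (auto simp: child_iff_parent parent_rel_def)
  then show ?thesis
    by (simp add: subtree_def)
qed

lemma parent_relD:
  assumes "(a, b) \<in> parent_rel"
  shows "b \<in> V" "b \<noteq> r" "a = parent b" "depth b = Suc (depth a)"
  using assms parent_edge(2) by (auto simp: parent_rel_def)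

lemma depth_less_descendant: "(a, b) \<in> parent_rel\<^sup>+ \<Longrightarrow> depth a < depth b"
  by (induction rule: trancl_induct) (auto dest: parent_relD(4))

lemma subtree_self: "v \<in> T v"
  by (simp add: mem_subtree_iff)

lemma subtree_subset: "T v \<subseteq> insert v V"
proof
  fix x assume "x \<in> T v"
  then have "(v, x) \<in> parent_rel\<^sup>*"
    by (simp add: mem_subtree_iff)
  then show "x \<in> insert v V"
    by (cases rule: rtranclE) (auto dest: parent_relD(1))
qed

lemma finite_subtree: "finite (T v)"
  using finite_V finite_subset[OF subtree_subset] by blast

lemma children_subset: "chs v \<subseteq> V"
  by (auto simp: mem_children_iff)

lemma finite_children: "finite (chs v)"
  using finite_V finite_subset[OF children_subset] by blast

lemma subtree_unfold: "T v = insert v (\<Union>w\<in>chs v. T w)"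
proof -
  have "(v, x) \<in> parent_rel\<^sup>* \<longleftrightarrow> x = v \<or> (\<exists>w. (v, w) \<in> parent_rel \<and> (w, x) \<in> parent_rel\<^sup>*)"
    for x
    by (auto elim: converse_rtranclE intro: converse_rtrancl_into_rtrancl)
  moreover have "(v, w) \<in> parent_rel \<longleftrightarrow> w \<in> chs v" for w
    by (auto simp: mem_children_iff parent_rel_def)
  ultimately show ?thesis
    by (auto simp: mem_subtree_iff)
qed

lemma parent_in_subtree:
  assumes "x \<in> T w" "x \<noteq> w"
  shows "parent x \<in> T w"
  using assms by (auto simp: mem_subtree_iff elim: rtranclE dest: parent_relD(3))

lemma root_notin_child_subtree: "w \<in> chs v \<Longrightarrow> v \<notin> T w"
proof
  assume "w \<in> chs v" "v \<in> T w"
  then have "depth w = Suc (depth v)" and "w = v \<or> depth w < depth v"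
    by (auto simp: mem_children_iff parent_edge(2) mem_subtree_iff rtrancl_eq_or_trancl
        dest: depth_less_descendant)
  then show False
    by auto
qed

lemma child_subtrees_disjoint:
  assumes "w1 \<in> chs v" "w2 \<in> chs v" "x \<in> T w1" "x \<in> T w2"
  shows "w1 = w2"
proof -
  have "single_valued (parent_rel\<inverse>)"
    by (auto simp: single_valued_def parent_rel_def)
  moreover have "(x, w1) \<in> (parent_rel\<inverse>)\<^sup>*" "(x, w2) \<in> (parent_rel\<inverse>)\<^sup>*"
    using assms(3,4) by (auto simp: mem_subtree_iff rtrancl_converse)
  ultimately have "(w1, w2) \<in> (parent_rel\<inverse>)\<^sup>* \<or> (w2, w1) \<in> (parent_rel\<inverse>)\<^sup>*"
    by (rule single_valued_confluent)
  then have "(w1, w2) \<in> parent_rel\<^sup>* \<or> (w2, w1) \<in> parent_rel\<^sup>*"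
    by (auto simp: rtrancl_converse)
  moreover have "depth w1 = depth w2"
    using assms(1,2) parent_edge(2) by (auto simp: mem_children_iff)
  ultimately show ?thesis
    by (auto simp: rtrancl_eq_or_trancl dest!: depth_less_descendant)
qed

lemma card_subtree: "card (T v) = Suc (\<Sum>w\<in>chs v. card (T w))"
proof -
  have "card (\<Union>w\<in>chs v. T w) = (\<Sum>w\<in>chs v. card (T w))"
    using child_subtrees_disjoint
    by (intro card_UN_disjoint finite_children finite_subtree ballI) blast+
  moreover have "v \<notin> (\<Union>w\<in>chs v. T w)"
    using root_notin_child_subtree by blast
  moreover have "finite (\<Union>w\<in>chs v. T w)"
    by (simp add: finite_children finite_subtree)
  ultimately show ?thesis
    using subtree_unfold[of v] by simp
qed

lemma card_subtree_child_less: "w \<in> chs v \<Longrightarrow> card (T w) < card (T v)"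
  using subtree_unfold[of v] root_notin_child_subtree subtree_self finite_subtree
  by (intro psubset_card_mono) blast+

lemma children_empty_iff: "chs v = {} \<longleftrightarrow> card (T v) = 1"
proof -
  have nonempty: "card (T w) \<noteq> 0" for w
    using finite_subtree subtree_self by (metis card_0_eq empty_iff)
  show ?thesis
    using card_subtree[of v] finite_children[of v] by (simp add: sum_eq_0_iff nonempty)
qed

lemma subtree_root: "T r = V"
proof -
  have "(r, v) \<in> parent_rel\<^sup>*" if "v \<in> V" for v
    using that
  proof (induction "depth v" arbitrary: v rule: less_induct)
    case less
    show ?case
    proof (cases "v = r")
      case False
      then have "(parent v, v) \<in> parent_rel" "depth (parent v) < depth v" "parent v \<in> V"
        using less.prems parent_edge(2) parent_in_V by (auto simp: parent_rel_def)
      then show ?thesis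
        using less.hyps by (meson rtrancl.rtrancl_into_rtrancl)
    qed simp
  qed
  then show ?thesis
    using subtree_subset[of r] root_in_V by (auto simp: mem_subtree_iff)
qed

end

section \<open>The polynomials C_v\<close>

lemma has_C_unique: "has_C V E r v p \<Longrightarrow> has_C V E r v q \<Longrightarrow> p = q"
proof (induction arbitrary: q rule: has_C.induct)
  case (leaf v)
  from leaf.prems show ?case
    by cases (use leaf.hyps in auto)
next
  case (internal v f)
  from internal.prems show ?case
  proof (cases rule: has_C.cases)
    case (internal g)
    then have "(\<Prod>w\<in>children V E r v. f w) = (\<Prod>w\<in>children V E r v. g w)"
      using internal.IH by (intro prod.cong) auto
    with internal show ?thesis
      by simp
  qed (use internal.hyps in simp)
qed

lemma C_poly_eqI:
  assumes "has_C V E r v p"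
  shows "C_poly V E r v = p"
  unfolding C_poly_def using assms by (rule the_equality) (rule has_C_unique[OF _ assms])

context finite_rooted_tree
begin

abbreviation C :: "'a \<Rightarrow> int poly" where
  "C \<equiv> C_poly V E r"

lemma C_poly_facts:
  "has_C V E r v (C v) \<and> two_eisenstein (C v) \<and> degree (C v) = card (T v) \<and>
   C v = (if chs v = {} then [:2, 1:] else C_step (\<Prod>w\<in>chs v. C w))"
proof (induction "card (T v)" arbitrary: v rule: less_induct)
  case less
  show ?case
  proof (cases "chs v = {}")
    case True
    then have leaf: "has_C V E r v [:2, 1:]"
      by (rule has_C.leaf)
    then have "C v = [:2, 1:]"
      by (rule C_poly_eqI)
    then show ?thesis
      using leaf True children_empty_iff by (simp add: two_eisenstein_def)
  next
    case False
    let ?Q = "\<Prod>w\<in>chs v. C w"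
    have IH: "has_C V E r w (C w)" "two_eisenstein (C w)" "degree (C w) = card (T w)"
      if "w \<in> chs v" for w
      using less card_subtree_child_less[OF that] by blast+
    have "degree ?Q = (\<Sum>w\<in>chs v. degree (C w))"
      using IH(2) by (rule two_eisenstein_prod)
    also have "\<dots> = (\<Sum>w\<in>chs v. card (T w))"
      using IH(3) by (rule sum.cong[OF refl])
    finally have card: "card (T v) = Suc (degree ?Q)"
      by (simp add: card_subtree[of v])
    have "has_C V E r v (monom 1 (card (T v)) + smult 2 ([:0, 1:] * ?Q) + [:2:])"
      using False IH(1) by (rule has_C.internal)
    then have "has_C V E r v (C_step ?Q)"
      by (simp only: card C_step_def)
    moreover have "lead_coeff ?Q \<ge> 0"
      using two_eisenstein_prod(2)[of "chs v" C] IH(2) by simp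
    ultimately show ?thesis
      using False card C_poly_eqI[OF \<open>has_C V E r v (C_step ?Q)\<close>]
      by (simp add: two_eisenstein_C_step degree_C_step)
  qed
qed

lemma two_eisenstein_C_poly: "two_eisenstein (C v)"
  and degree_C_poly: "degree (C v) = card (T v)"
  and C_poly_rec: "C v = (if chs v = {} then [:2, 1:] else C_step (\<Prod>w\<in>chs v. C w))"
  using C_poly_facts by blast+

end

section \<open>Isomorphisms\<close>

lemma child_iso:
  assumes f: "bij_betw f V V'" "f r = r'" and "r \<in> V" "E \<subseteq> V \<times> V"
    and edges: "\<forall>u\<in>V. \<forall>v\<in>V. (u, v) \<in> E \<longleftrightarrow> (f u, f v) \<in> E'"
    and "child V E r a b"
  shows "child V' E' r' (f a) (f b)"
proof -
  from assms(6) have ab: "(a, b) \<in> E" and "b \<noteq> r"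
    and path: "(r, a) \<in> (Restr E (V - {b}))\<^sup>*"
    unfolding child_def by auto
  have "a \<in> V" "b \<in> V"
    using ab assms(4) by auto
  have f_inj: "x \<in> V \<Longrightarrow> y \<in> V \<Longrightarrow> f x = f y \<longleftrightarrow> x = y" for x y
    using f(1) by (auto simp: bij_betw_def inj_on_def)
  have "(f r, f a) \<in> (Restr E' (V' - {f b}))\<^sup>*"
    using path
  proof (induction rule: rtrancl_induct)
    case (step x y)
    then have "(f x, f y) \<in> Restr E' (V' - {f b})"
      using edges f_inj \<open>b \<in> V\<close> bij_betwE[OF f(1)] by auto
    with step.IH show ?case
      by (rule rtrancl_into_rtrancl)
  qed simp
  moreover have "(f a, f b) \<in> E'" "f b \<noteq> r'"
    using edges ab \<open>a \<in> V\<close> \<open>b \<in> V\<close> \<open>b \<noteq> r\<close> f_inj assms(3) f(2) by auto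
  ultimately show ?thesis
    unfolding child_def f(2) by blast
qed

locale two_rooted_trees = A: finite_rooted_tree V E r + B: finite_rooted_tree V' E' r'
  for V :: "'a set" and E r and V' :: "'b set" and E' r'
begin

text \<open>Isomorphisms of T_v onto T_v' are described through the parent maps rather than through
  the edges, since in this form isomorphisms of the child subtrees glue together.\<close>

definition subtree_iso :: "('a \<Rightarrow> 'b) \<Rightarrow> 'a \<Rightarrow> 'b \<Rightarrow> bool" where
  "subtree_iso f v v' \<longleftrightarrow> bij_betw f (A.T v) (B.T v') \<and> f v = v' \<and>
     (\<forall>x \<in> A.T v - {v}. f (A.parent x) = B.parent (f x))"

definition glue :: "('a \<Rightarrow> 'a \<Rightarrow> 'b) \<Rightarrow> 'a \<Rightarrow> 'b \<Rightarrow> 'a \<Rightarrow> 'b" where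
  "glue F v v' x = (if x = v then v' else F (THE w. w \<in> A.chs v \<and> x \<in> A.T w) x)"

lemma glue_root: "glue F v v' v = v'"
  by (simp add: glue_def)

lemma glue_child: "w \<in> A.chs v \<Longrightarrow> x \<in> A.T w \<Longrightarrow> glue F v v' x = F w x"
proof -
  assume w: "w \<in> A.chs v" "x \<in> A.T w"
  then have "(THE w. w \<in> A.chs v \<and> x \<in> A.T w) = w"
    using A.child_subtrees_disjoint by blast
  moreover have "x \<noteq> v"
    using w A.root_notin_child_subtree by blast
  ultimately show ?thesis
    by (simp add: glue_def)
qed

lemma bij_betw_glue:
  assumes h: "bij_betw h (A.chs v) (B.chs v')"
    and F: "\<And>w. w \<in> A.chs v \<Longrightarrow> bij_betw (F w) (A.T w) (B.T (h w))"
  shows "bij_betw (glue F v v') (A.T v) (B.T v')"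
proof -
  let ?f = "glue F v v'"
  have "bij_betw ?f (\<Union>w\<in>A.chs v. A.T w) (\<Union>w\<in>A.chs v. B.T (h w))"
  proof (rule bij_betw_UNION_disjoint)
    show "disjoint_family_on (\<lambda>w. B.T (h w)) (A.chs v)"
      unfolding disjoint_family_on_def
    proof (intro ballI impI)
      fix w1 w2 assume w: "w1 \<in> A.chs v" "w2 \<in> A.chs v" "w1 \<noteq> w2"
      then have "h w1 \<noteq> h w2" "h w1 \<in> B.chs v'" "h w2 \<in> B.chs v'"
        using h by (auto simp: bij_betw_def dest: inj_onD)
      then show "B.T (h w1) \<inter> B.T (h w2) = {}"
        using B.child_subtrees_disjoint by blast
    qed
    show "bij_betw ?f (A.T w) (B.T (h w))" if "w \<in> A.chs v" for w
      using F[OF that] by (subst bij_betw_cong[where g = "F w"]) (simp_all add: glue_child[OF that])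
  qed
  moreover have "(\<Union>w\<in>A.chs v. B.T (h w)) = (\<Union>w'\<in>h ` A.chs v. B.T w')"
    by simp
  moreover have "h ` A.chs v = B.chs v'"
    using h by (simp add: bij_betw_def)
  ultimately have "bij_betw ?f (\<Union>w\<in>A.chs v. A.T w) (\<Union>w'\<in>B.chs v'. B.T w')"
    by simp
  then have "bij_betw ?f ((\<Union>w\<in>A.chs v. A.T w) \<union> {v}) ((\<Union>w'\<in>B.chs v'. B.T w') \<union> {?f v})"
    using A.root_notin_child_subtree B.root_notin_child_subtree glue_root
    by (intro notIn_Un_bij_betw) auto
  then show ?thesis
    using A.subtree_unfold[of v] B.subtree_unfold[of v'] glue_root by simp
qed

lemma subtree_iso_glue:
  assumes h: "bij_betw h (A.chs v) (B.chs v')"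
    and F: "\<And>w. w \<in> A.chs v \<Longrightarrow> subtree_iso (F w) w (h w)"
  shows "subtree_iso (glue F v v') v v'"
proof -
  have "glue F v v' (A.parent x) = B.parent (glue F v v' x)" if x: "x \<in> A.T v - {v}" for x
  proof -
    obtain w where w: "w \<in> A.chs v" "x \<in> A.T w"
      using x A.subtree_unfold[of v] by blast
    show ?thesis
    proof (cases "x = w")
      case True
      then have "A.parent x = v" "glue F v v' x = h w" "h w \<in> B.chs v'"
        using w F[OF w(1)] glue_child[OF w] bij_betwE[OF h]
        by (auto simp: A.mem_children_iff subtree_iso_def)
      then show ?thesis
        by (simp add: glue_root B.mem_children_iff)
    next
      case False
      then have "A.parent x \<in> A.T w"
        using w(2) by (rule A.parent_in_subtree[rotated])
      then show ?thesis
        using F[OF w(1)] glue_child[OF w(1)] w(2) False by (simp add: subtree_iso_def)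
    qed
  qed
  moreover have "bij_betw (glue F v v') (A.T v) (B.T v')"
    using h F by (intro bij_betw_glue) (auto simp: subtree_iso_def)
  ultimately show ?thesis
    unfolding subtree_iso_def using glue_root by blast
qed

lemma children_image_mset_eq:
  assumes "A.C v = B.C v'"
  shows "image_mset A.C (mset_set (A.chs v)) = image_mset B.C (mset_set (B.chs v'))"
proof -
  have "card (A.T v) = card (B.T v')"
    using assms A.degree_C_poly B.degree_C_poly by metis
  then have leaf: "A.chs v = {} \<longleftrightarrow> B.chs v' = {}"
    by (simp add: A.children_empty_iff B.children_empty_iff)
  show ?thesis
  proof (cases "A.chs v = {}")
    case False
    with assms leaf have "C_step (\<Prod>w\<in>A.chs v. A.C w) = C_step (\<Prod>w\<in>B.chs v'. B.C w)"
      using A.C_poly_rec[of v] B.C_poly_rec[of v'] by simp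
    then have "(\<Prod>w\<in>A.chs v. A.C w) = (\<Prod>w\<in>B.chs v'. B.C w)"
      by (simp only: C_step_inject)
    moreover have "prime (A.C w)" "prime (B.C w')" for w w'
      by (simp_all add: two_eisenstein_prime A.two_eisenstein_C_poly B.two_eisenstein_C_poly)
    ultimately show ?thesis
      by (intro image_mset_eq_if_prod_primes_eq A.finite_children B.finite_children)
  qed (use leaf in simp)
qed

lemma C_poly_eq_imp_subtree_iso: "A.C v = B.C v' \<Longrightarrow> \<exists>f. subtree_iso f v v'"
proof (induction "card (A.T v)" arbitrary: v v' rule: less_induct)
  case less
  obtain h where h: "bij_betw h (A.chs v) (B.chs v')"
    and h_C: "\<And>w. w \<in> A.chs v \<Longrightarrow> B.C (h w) = A.C w"
    using image_mset_eq_imp_bij_betw[OF A.finite_children B.finite_children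
        children_image_mset_eq[OF less.prems]] by blast
  have "\<forall>w\<in>A.chs v. \<exists>g. subtree_iso g w (h w)"
  proof
    fix w assume w: "w \<in> A.chs v"
    show "\<exists>g. subtree_iso g w (h w)"
      using less.hyps[OF A.card_subtree_child_less[OF w]] h_C[OF w] by simp
  qed
  then obtain F where "\<forall>w\<in>A.chs v. subtree_iso (F w) w (h w)"
    by (metis bchoice)
  with h show ?case
    using subtree_iso_glue by blast
qed

lemma subtree_iso_root_parent_iff:
  assumes f: "subtree_iso f r r'" and "x \<in> V" "y \<in> V"
  shows "x \<noteq> r \<and> y = A.parent x \<longleftrightarrow> f x \<noteq> r' \<and> f y = B.parent (f x)"
proof -
  have bij: "bij_betw f V V'" and "f r = r'"
    and f_parent: "\<And>x. x \<in> V \<Longrightarrow> x \<noteq> r \<Longrightarrow> f (A.parent x) = B.parent (f x)"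
    using f by (auto simp: subtree_iso_def A.subtree_root B.subtree_root)
  have f_inj: "u \<in> V \<Longrightarrow> w \<in> V \<Longrightarrow> f u = f w \<longleftrightarrow> u = w" for u w
    using bij by (auto simp: bij_betw_def inj_on_def)
  show ?thesis
  proof (cases "x = r")
    case False
    then have "f x \<noteq> r'"
      using f_inj[OF \<open>x \<in> V\<close> A.root_in_V] \<open>f r = r'\<close> by simp
    moreover have "y = A.parent x \<longleftrightarrow> f y = B.parent (f x)"
      using f_inj[OF \<open>y \<in> V\<close> A.parent_in_V] f_parent \<open>x \<in> V\<close> False by simp
    ultimately show ?thesis
      using False by simp
  qed (simp add: \<open>f r = r'\<close>)
qed

lemma subtree_iso_root_children:
  assumes f: "subtree_iso f r r'" and "v \<in> V"
  shows "B.chs (f v) = f ` A.chs v"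
proof -
  have bij: "bij_betw f V V'"
    using f by (simp add: subtree_iso_def A.subtree_root B.subtree_root)
  have "w \<in> A.chs v \<longleftrightarrow> f w \<in> B.chs (f v)" if "w \<in> V" for w
    using subtree_iso_root_parent_iff[OF f that \<open>v \<in> V\<close>] that bij_betwE[OF bij]
    by (auto simp: A.mem_children_iff B.mem_children_iff)
  moreover have "B.chs (f v) \<subseteq> f ` V" "A.chs v \<subseteq> V"
    using bij B.children_subset A.children_subset by (auto simp: bij_betw_def)
  ultimately show ?thesis
    by blast
qed

lemma subtree_iso_root_C_poly:
  assumes f: "subtree_iso f r r'"
  shows "v \<in> V \<Longrightarrow> B.C (f v) = A.C v"
proof (induction "card (A.T v)" arbitrary: v rule: less_induct)
  case less
  have "inj_on f V"
    using f by (simp add: subtree_iso_def A.subtree_root bij_betw_def)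
  then have "inj_on f (A.chs v)"
    using A.children_subset by (rule inj_on_subset)
  then have "(\<Prod>w'\<in>B.chs (f v). B.C w') = (\<Prod>w\<in>A.chs v. B.C (f w))"
    by (simp add: subtree_iso_root_children[OF f less.prems] prod.reindex)
  also have "\<dots> = (\<Prod>w\<in>A.chs v. A.C w)"
  proof (rule prod.cong[OF refl])
    fix w assume w: "w \<in> A.chs v"
    then show "B.C (f w) = A.C w"
      using less.hyps[OF A.card_subtree_child_less[OF w]] A.children_subset by blast
  qed
  finally show ?case
    using A.C_poly_rec[of v] B.C_poly_rec[of "f v"] subtree_iso_root_children[OF f less.prems]
    by simp
qed

lemma rooted_tree_iso_iff_subtree_iso: "rooted_tree_iso V E r V' E' r' \<longleftrightarrow> (\<exists>f. subtree_iso f r r')"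
proof
  assume "rooted_tree_iso V E r V' E' r'"
  then obtain f where f: "bij_betw f V V'" "f r = r'"
    and edges: "\<forall>u\<in>V. \<forall>v\<in>V. (u, v) \<in> E \<longleftrightarrow> (f u, f v) \<in> E'"
    unfolding rooted_tree_iso_def by blast
  have "f (A.parent x) = B.parent (f x)" if "x \<in> V" "x \<noteq> r" for x
  proof -
    have "child V E r (A.parent x) x"
      using that by (simp add: A.child_iff_parent)
    then have "child V' E' r' (f (A.parent x)) (f x)"
      by (rule child_iso[OF f A.root_in_V A.edges_subset edges])
    then show ?thesis
      by (simp add: B.child_iff_parent)
  qed
  with f have "subtree_iso f r r'"
    unfolding subtree_iso_def A.subtree_root B.subtree_root by blast
  then show "\<exists>f. subtree_iso f r r'"
    by blast
next
  assume "\<exists>f. subtree_iso f r r'"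
  then obtain f where f: "subtree_iso f r r'" ..
  then have bij: "bij_betw f V V'"
    by (simp add: subtree_iso_def A.subtree_root B.subtree_root)
  have "(u, v) \<in> E \<longleftrightarrow> (f u, f v) \<in> E'" if uv: "u \<in> V" "v \<in> V" for u v
  proof -
    have "f u \<in> V'" "f v \<in> V'"
      using bij_betwE[OF bij] uv by blast+
    have "(u, v) \<in> E \<longleftrightarrow> (v \<noteq> r \<and> u = A.parent v) \<or> (u \<noteq> r \<and> v = A.parent u)"
      by (rule A.edge_iff_parent[OF uv])
    also have "\<dots> \<longleftrightarrow> (f v \<noteq> r' \<and> f u = B.parent (f v)) \<or> (f u \<noteq> r' \<and> f v = B.parent (f u))"
      by (simp only: subtree_iso_root_parent_iff[OF f uv(2,1)] subtree_iso_root_parent_iff[OF f uv])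
    also have "\<dots> \<longleftrightarrow> (f u, f v) \<in> E'"
      by (rule B.edge_iff_parent[OF \<open>f u \<in> V'\<close> \<open>f v \<in> V'\<close>, symmetric])
    finally show ?thesis .
  qed
  with bij f show "rooted_tree_iso V E r V' E' r'"
    unfolding rooted_tree_iso_def subtree_iso_def by blast
qed

end

theorem mainTheorem3:
  fixes V :: "'a set" and E :: "('a \<times> 'a) set" and r :: 'a
    and V' :: "'b set" and E' :: "('b \<times> 'b) set" and r' :: 'b
  assumes "rooted_tree V E r" and "rooted_tree V' E' r'"
  shows "C_tree V E r = C_tree V' E' r' \<longleftrightarrow> rooted_tree_iso V E r V' E' r'"
proof -
  interpret two_rooted_trees V E r V' E' r'
    using assms by (simp add: two_rooted_trees_def finite_rooted_tree_def)
  have "C_tree V E r = C_tree V' E' r' \<longleftrightarrow> (\<exists>f. subtree_iso f r r')"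
  proof
    show "C_tree V E r = C_tree V' E' r' \<Longrightarrow> \<exists>f. subtree_iso f r r'"
      unfolding C_tree_def by (rule C_poly_eq_imp_subtree_iso)
  next
    assume "\<exists>f. subtree_iso f r r'"
    then obtain f where f: "subtree_iso f r r'" ..
    then have "f r = r'"
      by (simp add: subtree_iso_def)
    with subtree_iso_root_C_poly[OF f A.root_in_V] show "C_tree V E r = C_tree V' E' r'"
      by (simp add: C_tree_def)
  qed
  also have "\<dots> \<longleftrightarrow> rooted_tree_iso V E r V' E' r'"
    by (rule rooted_tree_iso_iff_subtree_iso[symmetric])
  finally show ?thesis .
qed

end
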